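(* Let $m \geq 1$ be an integer, let $\lambda_0 \geq 0 > \lambda_1 \geq \lambda_2 \geq \lambda_3$ be real numbers and let $z_1, \ldots, z_m$ be complex numbers with $z_j = a_j + b_j i$, $a_j \in \mathbb{R}$, $b_j > 0$ for $j = 1, \ldots, m$. If $\lambda_0 + \sum_{j=1}^3 \lambda_j - 2\sum_{j=1}^m |z_j| \geq 0$, then there is a $(2m+4) \times (2m+4)$ normal centrosymmetric nonnegative matrix with eigenvalues $\lambda_0, \lambda_1, \lambda_2, \lambda_3, z_1, \ldots, z_m, \overline{z}_1, \ldots, \overline{z}_m$.
   Context: $J$ denotes the reverse identity matrix of the appropriate size (ones on the anti-diagonal, zeros elsewhere). A square matrix $Q$ is centrosymmetric if $JQJ = Q$, nonnegative if all entries are nonnegative, and normal if $QQ^* = Q^*Q$. *)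

theory Defs
  imports "Jordan_Normal_Form.Char_Poly" "HOL-Computational_Algebra.Polynomial"
begin

definition rev_id_mat :: "nat \<Rightarrow> 'a :: {zero,one} mat" where
  "rev_id_mat n = mat n n (\<lambda>(i,j). if i + j = n - 1 then 1 else 0)"

definition centrosymmetric :: "'a :: comm_ring_1 mat \<Rightarrow> bool" where
  "centrosymmetric Q \<longleftrightarrow> rev_id_mat (dim_row Q) * Q * rev_id_mat (dim_row Q) = Q"

definition nonneg_mat :: "real mat \<Rightarrow> bool" where
  "nonneg_mat Q \<longleftrightarrow> (\<forall>i < dim_row Q. \<forall>j < dim_col Q. Q $$ (i,j) \<ge> 0)"

definition normal_real_mat :: "real mat \<Rightarrow> bool" where
  "normal_real_mat Q \<longleftrightarrow> Q * transpose_mat Q = transpose_mat Q * Q"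

text \<open>The (complex) eigenvalues of a real square matrix, counted with algebraic multiplicity,
  are exactly the entries of the list L.\<close>
definition has_eigenvalues :: "real mat \<Rightarrow> complex list \<Rightarrow> bool" where
  "has_eigenvalues Q L \<longleftrightarrow>
     char_poly (map_mat complex_of_real Q) = (\<Prod>a\<leftarrow>L. [:- a, 1:])"

end

(*
  The matrix is A = U diag(mu) U^*, for an explicit unitary U. Split the 2m+4 positions into
  the four middle ones (the inner block) and the 2m outer ones. The columns of U are a real
  vector p (equal to c/2 inside and s/sqrt(2m) outside), a complex vector v and its conjugate
  (eigenvalues z_m and its conjugate), two vectors supported on the inner block built from rows
  of a 4x4 Hadamard matrix (eigenvalues lambda_1, lambda_2), and the 2m-1 nonconstant characters
  of the cyclic group on the outer positions (eigenvalues z_1..z_(m-1), lambda_3 and the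
  conjugates). Conjugate eigenvalues sit on conjugate columns, so A is real; it is normal
  because it is unitarily diagonalised. The reversal i -> 2m+3-i fixes p and v, negates the two
  Hadamard vectors and acts on the outer positions as the cyclic shift by m, so A is
  centrosymmetric. The character part is a real circulant whose entries are at most
  (|lambda_3| + 2 sum_(j<m) |z_j|)/(2m) in modulus, so nonnegativity of the entries reduces to
  three inequalities in c and s with c^2 + s^2 = 1, which the trace condition makes solvable.
*)

theory Submission
  imports Defs
begin

section \<open>Unitary diagonalisation\<close>

definition conj_transpose_mat :: "complex mat \<Rightarrow> complex mat" where
  "conj_transpose_mat M = mat (dim_col M) (dim_row M) (\<lambda>(i,j). cnj (M $$ (j,i)))"

lemma conj_transpose_mat_carrier [simp]:
  "M \<in> carrier_mat a b \<Longrightarrow> conj_transpose_mat M \<in> carrier_mat b a"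
  by (simp add: conj_transpose_mat_def)

lemma conj_transpose_mat_mult:
  assumes "A \<in> carrier_mat a b" and "B \<in> carrier_mat b c"
  shows "conj_transpose_mat (A * B) = conj_transpose_mat B * conj_transpose_mat A"
  by (rule eq_matI) (use assms in \<open>auto simp: conj_transpose_mat_def scalar_prod_def mult.commute\<close>)

lemma conj_transpose_mat_conj_transpose_mat [simp]:
  "conj_transpose_mat (conj_transpose_mat M) = M"
  by (rule eq_matI) (auto simp: conj_transpose_mat_def)

lemma conj_transpose_mat_diag:
  "conj_transpose_mat (mat_diag n d) = mat_diag n (\<lambda>k. cnj (d k))"
  by (rule eq_matI) (auto simp: conj_transpose_mat_def mat_diag_def)

lemma conj_transpose_of_real_mat:
  "conj_transpose_mat (map_mat complex_of_real A) = map_mat complex_of_real (transpose_mat A)"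
  by (rule eq_matI) (auto simp: conj_transpose_mat_def)

lemma of_real_mat_mult:
  assumes "A \<in> carrier_mat a b" and "B \<in> carrier_mat b c"
  shows "map_mat complex_of_real (A * B) = map_mat complex_of_real A * map_mat complex_of_real B"
  by (rule eq_matI) (use assms in \<open>auto simp: scalar_prod_def\<close>)

lemma unitary_mat_right_inverse:
  assumes "U \<in> carrier_mat n n" and "conj_transpose_mat U * U = 1\<^sub>m n"
  shows "U * conj_transpose_mat U = 1\<^sub>m n"
  using mat_mult_left_right_inverse[OF conj_transpose_mat_carrier[OF assms(1)] assms] .

lemma index_mult_mat_diag_mult:
  assumes "U \<in> carrier_mat n n" and "V \<in> carrier_mat n n" and "i < n" and "l < n"
  shows "(U * mat_diag n d * V) $$ (i,l) = (\<Sum>k<n. U $$ (i,k) * d k * V $$ (k,l))"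
  using assms by (simp add: mat_diag_mult_right scalar_prod_def atLeast0LessThan)

lemma unitary_conj_mult:
  assumes U: "U \<in> carrier_mat n n" and HU: "conj_transpose_mat U * U = 1\<^sub>m n"
    and X: "X \<in> carrier_mat n n" and Y: "Y \<in> carrier_mat n n"
  shows "(U * X * conj_transpose_mat U) * (U * Y * conj_transpose_mat U)
       = U * (X * Y) * conj_transpose_mat U"
proof -
  let ?H = "conj_transpose_mat U"
  have H: "?H \<in> carrier_mat n n" using U by simp
  have "(U * X * ?H) * (U * Y * ?H) = U * X * (?H * (U * Y * ?H))"
    by (rule assoc_mult_mat[of _ n n _ n _ n]) (use U X Y H in \<open>auto intro!: mult_carrier_mat\<close>)
  also have "?H * (U * Y * ?H) = (?H * U) * Y * ?H"
    using U Y H by (simp add: assoc_mult_mat[of _ n n _ n _ n])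
  also have "\<dots> = Y * ?H" using HU Y by simp
  also have "U * X * (Y * ?H) = U * (X * Y) * ?H"
    using U X Y H by (simp add: assoc_mult_mat[of _ n n _ n _ n])
  finally show ?thesis .
qed

lemma unitary_conj_diag_normal:
  fixes d :: "nat \<Rightarrow> complex"
  assumes U: "U \<in> carrier_mat n n" and HU: "conj_transpose_mat U * U = 1\<^sub>m n"
    and A: "A = U * mat_diag n d * conj_transpose_mat U"
  shows "A * conj_transpose_mat A = conj_transpose_mat A * A"
proof -
  let ?H = "conj_transpose_mat U"
  have D: "mat_diag n d \<in> carrier_mat n n" by simp
  have "conj_transpose_mat A = conj_transpose_mat ?H * conj_transpose_mat (U * mat_diag n d)"
    unfolding A by (rule conj_transpose_mat_mult[OF mult_carrier_mat[OF U D] conj_transpose_mat_carrier[OF U]])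
  also have "\<dots> = U * (mat_diag n (\<lambda>k. cnj (d k)) * ?H)"
    by (simp add: conj_transpose_mat_mult[OF U D] conj_transpose_mat_diag)
  also have "\<dots> = U * mat_diag n (\<lambda>k. cnj (d k)) * ?H"
    using U by (simp add: assoc_mult_mat[of _ n n _ n _ n])
  finally have "conj_transpose_mat A = U * mat_diag n (\<lambda>k. cnj (d k)) * ?H" .
  thus ?thesis
    unfolding A by (simp add: unitary_conj_mult[OF U HU] mult.commute)
qed

lemma char_poly_unitary_conj_diag:
  fixes d :: "nat \<Rightarrow> complex"
  assumes U: "U \<in> carrier_mat n n" and HU: "conj_transpose_mat U * U = 1\<^sub>m n"
  shows "char_poly (U * mat_diag n d * conj_transpose_mat U) = (\<Prod>k<n. [:- d k, 1:])"
proof -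
  have "similar_mat (U * mat_diag n d * conj_transpose_mat U) (mat_diag n d)"
    using U HU unitary_mat_right_inverse[OF U HU] conj_transpose_mat_carrier[OF U]
      mult_carrier_mat[OF mult_carrier_mat[OF U mat_diag_dim] conj_transpose_mat_carrier[OF U]]
    by (intro similar_matI[of _ _ U _ n]) auto
  moreover have "upper_triangular (mat_diag n d)"
    by (rule upper_triangularI) (simp add: mat_diag_def)
  hence "char_poly (mat_diag n d) = (\<Prod>a\<leftarrow>diag_mat (mat_diag n d). [:- a, 1:])"
    by (rule char_poly_upper_triangular[OF mat_diag_dim])
  moreover have "diag_mat (mat_diag n d) = map d [0..<n]"
    by (simp add: diag_mat_def mat_diag_def list_eq_iff_nth_eq)
  ultimately show ?thesis
    by (simp add: char_poly_similar prod.distinct_set_conv_list[symmetric] atLeast0LessThan)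
qed

lemma normal_real_mat_of_unitary_diag:
  fixes d :: "nat \<Rightarrow> complex"
  assumes A: "A \<in> carrier_mat n n" and U: "U \<in> carrier_mat n n"
    and HU: "conj_transpose_mat U * U = 1\<^sub>m n"
    and AU: "map_mat complex_of_real A = U * mat_diag n d * conj_transpose_mat U"
  shows "normal_real_mat A"
proof -
  have AT: "transpose_mat A \<in> carrier_mat n n" using A by simp
  have "map_mat complex_of_real (A * transpose_mat A) = map_mat complex_of_real (transpose_mat A * A)"
    using unitary_conj_diag_normal[OF U HU AU]
    by (simp add: of_real_mat_mult[OF A AT] of_real_mat_mult[OF AT A] conj_transpose_of_real_mat)
  hence "A * transpose_mat A = transpose_mat A * A"
    by (rule of_real_hom.mat_hom_inj)
  thus ?thesis unfolding normal_real_mat_def .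
qed

lemma index_rev_id_mat_mult:
  assumes "(A :: 'a :: comm_ring_1 mat) \<in> carrier_mat n k" and "i < n" and "j < k"
  shows "(rev_id_mat n * A) $$ (i,j) = A $$ (n-1-i, j)"
proof -
  have "(rev_id_mat n * A) $$ (i,j) = (\<Sum>t<n. (if i + t = n-1 then 1 else 0) * A $$ (t,j))"
    using assms by (simp add: rev_id_mat_def scalar_prod_def atLeast0LessThan)
  also have "\<dots> = (\<Sum>t<n. (if t = n-1-i then A $$ (t,j) else 0))"
    by (rule sum.cong) (use assms in auto)
  finally show ?thesis using assms by simp
qed

lemma index_mult_rev_id_mat:
  assumes "(A :: 'a :: comm_ring_1 mat) \<in> carrier_mat k n" and "i < k" and "j < n"
  shows "(A * rev_id_mat n) $$ (i,j) = A $$ (i, n-1-j)"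
proof -
  have "(A * rev_id_mat n) $$ (i,j) = (\<Sum>t<n. A $$ (i,t) * (if t + j = n-1 then 1 else 0))"
    using assms by (simp add: rev_id_mat_def scalar_prod_def atLeast0LessThan)
  also have "\<dots> = (\<Sum>t<n. (if t = n-1-j then A $$ (i,t) else 0))"
    by (rule sum.cong) (use assms in auto)
  finally show ?thesis using assms by simp
qed

lemma centrosymmetricI:
  assumes A: "(A :: 'a :: comm_ring_1 mat) \<in> carrier_mat n n"
    and sym: "\<And>i j. i < n \<Longrightarrow> j < n \<Longrightarrow> A $$ (n-1-i, n-1-j) = A $$ (i,j)"
  shows "centrosymmetric A"
proof -
  have J: "rev_id_mat n \<in> carrier_mat n n" by (simp add: rev_id_mat_def)
  have "rev_id_mat n * A * rev_id_mat n = A"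
  proof (rule eq_matI)
    fix i j assume "i < dim_row A" and "j < dim_col A"
    hence i: "i < n" and j: "j < n" using A by auto
    have "(rev_id_mat n * A * rev_id_mat n) $$ (i,j) = (rev_id_mat n * A) $$ (i, n-1-j)"
      using index_mult_rev_id_mat[OF mult_carrier_mat[OF J A] i j] .
    also have "\<dots> = A $$ (n-1-i, n-1-j)" using index_rev_id_mat_mult[OF A i] j by simp
    also have "\<dots> = A $$ (i,j)" using sym[OF i j] .
    finally show "(rev_id_mat n * A * rev_id_mat n) $$ (i,j) = A $$ (i,j)" .
  qed (use A in \<open>auto simp: rev_id_mat_def\<close>)
  thus ?thesis unfolding centrosymmetric_def using A by simp
qed

section \<open>Roots of unity\<close>

lemma cis_add_multiple_2pi: "cis (x + 2*pi*of_int d) = cis x"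
  by (simp flip: cis_mult)

lemma sum_cis_root_of_unity_eq_0:
  fixes N :: nat and k :: int
  assumes N: "N > 0" and nd: "\<not> int N dvd k"
  shows "(\<Sum>u<N. cis (2*pi*of_int k * real u / real N)) = 0"
proof -
  define q where "q = cis (2*pi*of_int k / real N)"
  have pow: "cis (2*pi*of_int k * real u / real N) = q ^ u" for u
    unfolding q_def DeMoivre by (simp add: field_simps)
  have "q ^ N = cis (2*pi*of_int k)"
    using N unfolding q_def DeMoivre by (simp add: field_simps)
  hence "q ^ N = 1" by simp
  moreover have "q \<noteq> 1"
  proof
    assume "q = 1"
    hence "cos (2*pi*of_int k / real N) = 1" unfolding q_def
      by (metis cis.simps(1) one_complex.simps(1))
    then obtain j :: int where "2*pi*of_int k / real N = of_int j * 2 * pi"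
      using cos_one_2pi_int by blast
    hence "of_int k = (of_int (j * int N) :: real)" using N by (simp add: field_simps)
    hence "k = j * int N" by (simp only: of_int_eq_iff)
    thus False using nd by simp
  qed
  ultimately show ?thesis using geometric_sum[of q N] by (simp add: pow)
qed

lemma cis_orthogonality:
  fixes N f f' :: nat
  assumes N: "N > 0" and f: "f < N" and f': "f' < N"
  shows "(\<Sum>u<N. cnj (cis (2*pi*real f*real u/real N)) * cis (2*pi*real f'*real u/real N))
         = (if f = f' then of_nat N else 0)"
proof -
  have diff: "cnj (cis (2*pi*real f*real u/real N)) * cis (2*pi*real f'*real u/real N)
        = cis (2*pi*of_int (int f' - int f)*real u/real N)" for u
    by (simp add: cis_cnj cis_mult diff_divide_distrib algebra_simps)
  show ?thesis
  proof (cases "f = f'")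
    case True thus ?thesis unfolding diff by simp
  next
    case False
    have "\<not> int N dvd (int f' - int f)"
    proof
      assume "int N dvd (int f' - int f)"
      hence "\<bar>int N\<bar> \<le> \<bar>int f' - int f\<bar>" using False by (intro dvd_imp_le_int) auto
      thus False using f f' by linarith
    qed
    from sum_cis_root_of_unity_eq_0[OF N this] show ?thesis unfolding diff using False by simp
  qed
qed

section \<open>The unitary matrix\<close>

definition inner_pos :: "nat \<Rightarrow> nat \<Rightarrow> bool" where
  "inner_pos m i \<longleftrightarrow> m \<le> i \<and> i < m+4"

text \<open>The involution \<open>outer_coord m\<close> matches the cyclic coordinates \<open>0..<2*m\<close> with the
  outer positions; under it the reversal \<open>i \<mapsto> 2*m+3-i\<close> becomes the shift by \<open>m\<close>.\<close>

definition outer_coord :: "nat \<Rightarrow> nat \<Rightarrow> nat" where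
  "outer_coord m x = (if x < m then x else 3*m+3-x)"

lemma outer_coord_outer_coord: "u < 2*m \<Longrightarrow> outer_coord m (outer_coord m u) = u"
  by (auto simp: outer_coord_def)

lemma not_inner_pos_outer_coord: "u < 2*m \<Longrightarrow> \<not> inner_pos m (outer_coord m u)"
  by (auto simp: outer_coord_def inner_pos_def)

lemma inner_pos_reflect: "i < 2*m+4 \<Longrightarrow> inner_pos m (2*m+3-i) = inner_pos m i"
  by (auto simp: inner_pos_def)

lemma outer_coord_reflect:
  assumes "i < 2*m+4" and "\<not> inner_pos m i"
  shows "int (outer_coord m (2*m+3-i)) = int (outer_coord m i) + int m
       \<or> int (outer_coord m (2*m+3-i)) = int (outer_coord m i) - int m"
  using assms by (auto simp: outer_coord_def inner_pos_def)

lemma sum_inner_outer: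
  fixes F :: "nat \<Rightarrow> 'a::comm_monoid_add"
  shows "(\<Sum>i<2*m+4. F i) = (\<Sum>j<4. F (m+j)) + (\<Sum>u<2*m. F (outer_coord m u))"
proof -
  have split: "{..<2*m+4} = {..<m} \<union> {m..<m+4} \<union> {m+4..<2*m+4}" by auto
  have "(\<Sum>i<2*m+4. F i) = (\<Sum>i<m. F i) + (\<Sum>i\<in>{m..<m+4}. F i) + (\<Sum>i\<in>{m+4..<2*m+4}. F i)"
    unfolding split by (subst sum.union_disjoint, auto, subst sum.union_disjoint, auto)
  moreover have "(\<Sum>i\<in>{m..<m+4}. F i) = (\<Sum>j<4. F (m+j))"
    by (rule sum.reindex_bij_witness[where j="\<lambda>i. i - m" and i="\<lambda>j. m+j"]) auto
  moreover have "(\<Sum>u<2*m. F (outer_coord m u)) = (\<Sum>u<m. F u) + (\<Sum>u\<in>{m..<2*m}. F (3*m+3-u))"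
  proof -
    have split: "{..<2*m} = {..<m} \<union> {m..<2*m}" by auto
    have "(\<Sum>u<2*m. F (outer_coord m u))
        = (\<Sum>u<m. F (outer_coord m u)) + (\<Sum>u\<in>{m..<2*m}. F (outer_coord m u))"
      unfolding split by (rule sum.union_disjoint) auto
    thus ?thesis by (simp add: outer_coord_def)
  qed
  moreover have "(\<Sum>u\<in>{m..<2*m}. F (3*m+3-u)) = (\<Sum>i\<in>{m+4..<2*m+4}. F i)"
    by (rule sum.reindex_bij_witness[where i="\<lambda>i. 3*m+3-i" and j="\<lambda>u. 3*m+3-u"]) auto
  ultimately show ?thesis by (simp add: ac_simps)
qed

lemma sum_four: "(\<Sum>j<(4::nat). f j) = f 0 + f 1 + f 2 + (f 3 :: 'a::comm_monoid_add)"
  by (simp add: eval_nat_numeral add.assoc)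

text \<open>Rows of the 4x4 Hadamard matrix orthogonal to \<open>(1,1,1,1)\<close>: \<open>had1\<close> and \<open>had2\<close> are
  odd and \<open>had3\<close> is even under \<open>j \<mapsto> 3-j\<close>.\<close>

definition had1 :: "nat \<Rightarrow> real" where "had1 j = (if j < 2 then 1 else -1)"
definition had2 :: "nat \<Rightarrow> real" where "had2 j = (if even j then 1 else -1)"
definition had3 :: "nat \<Rightarrow> real" where "had3 j = (if j = 0 \<or> j = 3 then 1 else -1)"

definition pvec :: "nat \<Rightarrow> real \<Rightarrow> real \<Rightarrow> nat \<Rightarrow> real" where
  "pvec m c s i = (if inner_pos m i then c/2 else s / sqrt (2*m))"

definition vvec :: "nat \<Rightarrow> real \<Rightarrow> real \<Rightarrow> nat \<Rightarrow> complex" where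
  "vvec m c s i = (if inner_pos m i then Complex (s/(2*sqrt 2)) (had3 (i-m)/(2*sqrt 2))
     else Complex (- c / (sqrt 2 * sqrt (2*m))) 0)"

definition wvec1 :: "nat \<Rightarrow> nat \<Rightarrow> real" where
  "wvec1 m i = (if inner_pos m i then had1 (i-m)/2 else 0)"

definition wvec2 :: "nat \<Rightarrow> nat \<Rightarrow> real" where
  "wvec2 m i = (if inner_pos m i then had2 (i-m)/2 else 0)"

definition fourier_vec :: "nat \<Rightarrow> nat \<Rightarrow> nat \<Rightarrow> complex" where
  "fourier_vec m f i = (if inner_pos m i then 0
     else cis (2*pi*real f * real (outer_coord m i) / real (2*m)) / complex_of_real (sqrt (2*m)))"

definition ucol :: "nat \<Rightarrow> real \<Rightarrow> real \<Rightarrow> nat \<Rightarrow> nat \<Rightarrow> complex" where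
  "ucol m c s k i =
     (if k = 0 then complex_of_real (pvec m c s i)
      else if k = 1 then vvec m c s i
      else if k = 2 then cnj (vvec m c s i)
      else if k = 3 then complex_of_real (wvec1 m i)
      else if k = 4 then complex_of_real (wvec2 m i)
      else fourier_vec m (k-4) i)"

definition umat :: "nat \<Rightarrow> real \<Rightarrow> real \<Rightarrow> complex mat" where
  "umat m c s = mat (2*m+4) (2*m+4) (\<lambda>(i,k). ucol m c s k i)"

lemma umat_carrier: "umat m c s \<in> carrier_mat (2*m+4) (2*m+4)"
  by (simp add: umat_def)

lemma ucol_inner:
  assumes "j < 4"
  shows "ucol m c s k (m+j) =
   (if k = 0 then Complex (c/2) 0
    else if k = 1 then Complex (s/(2*sqrt 2)) (had3 j/(2*sqrt 2))
    else if k = 2 then Complex (s/(2*sqrt 2)) (- had3 j/(2*sqrt 2))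
    else if k = 3 then Complex (had1 j/2) 0
    else if k = 4 then Complex (had2 j/2) 0
    else 0)"
  using assms
  by (simp add: ucol_def pvec_def vvec_def wvec1_def wvec2_def fourier_vec_def inner_pos_def
      complex_eq_iff)

lemma ucol_outer:
  assumes "u < 2*m"
  shows "ucol m c s k (outer_coord m u) =
   (if k = 0 then Complex (s / sqrt (2*m)) 0
    else if k = 1 \<or> k = 2 then Complex (- c / (sqrt 2 * sqrt (2*m))) 0
    else if k \<le> 4 then 0
    else cis (2*pi*real (k-4) * real u / real (2*m)) / complex_of_real (sqrt (2*m)))"
  using not_inner_pos_outer_coord[OF assms] outer_coord_outer_coord[OF assms]
  by (simp add: ucol_def pvec_def vvec_def wvec1_def wvec2_def fourier_vec_def complex_eq_iff)

lemma ucol_orthonormal_low: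
  assumes m: "m \<ge> 1" and cs: "c^2 + s^2 = 1" and k: "k \<le> 4" and k': "k' \<le> 4"
  shows "(\<Sum>i<2*m+4. cnj (ucol m c s k i) * ucol m c s k' i) = (if k = k' then 1 else 0)"
proof -
  have sq2: "sqrt 2 * sqrt 2 = (2::real)" by simp
  have sqm: "sqrt (real (2*m)) * sqrt (real (2*m)) = real (2*m)" by simp
  have outer_const: "(\<Sum>u<2*m. cnj (ucol m c s k (outer_coord m u)) * ucol m c s k' (outer_coord m u))
      = of_nat (2*m) * (cnj (ucol m c s k (outer_coord m 0)) * ucol m c s k' (outer_coord m 0))"
  proof -
    have "(\<Sum>u<2*m. cnj (ucol m c s k (outer_coord m u)) * ucol m c s k' (outer_coord m u))
       = (\<Sum>u<2*m. cnj (ucol m c s k (outer_coord m 0)) * ucol m c s k' (outer_coord m 0))"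
      by (rule sum.cong) (use m k k' in \<open>simp_all add: ucol_outer\<close>)
    thus ?thesis by simp
  qed
  have cs32: "c * (c * 32) + s * (s * 32) = 32" using cs by (simp add: power2_eq_square algebra_simps)
  have "k \<in> {0,1,2,3,4}" "k' \<in> {0,1,2,3,4}" using k k' by auto
  thus ?thesis
    unfolding sum_inner_outer outer_const
    using ucol_outer[of 0 m] m
    apply (simp only: sum_four ucol_inner insert_iff empty_iff)
    apply (elim disjE)
    apply (simp_all add: had1_def had2_def had3_def complex_eq_iff field_simps sq2 sqm)
    using cs32 by simp_all
qed

lemma of_real_sqrt_mult_self:
  "complex_of_real (sqrt (real n)) * complex_of_real (sqrt (real n)) = of_nat n"
  by (simp flip: of_real_mult)

lemma sum_ucol_inner_eq_0:
  assumes "k \<ge> 5 \<or> k' \<ge> 5"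
  shows "(\<Sum>j<4. cnj (ucol m c s k (m+j)) * ucol m c s k' (m+j)) = 0"
  by (rule sum.neutral) (use assms in \<open>auto simp: ucol_inner\<close>)

lemma ucol_orthogonal_low_fourier:
  assumes m: "m \<ge> 1" and k: "k \<le> 4" and k': "5 \<le> k'" "k' < 2*m+4"
  shows "(\<Sum>i<2*m+4. cnj (ucol m c s k i) * ucol m c s k' i) = 0"
proof -
  have "(\<Sum>u<2*m. cnj (ucol m c s k (outer_coord m u)) * ucol m c s k' (outer_coord m u))
      = cnj (ucol m c s k (outer_coord m 0)) / complex_of_real (sqrt (2*m))
        * (\<Sum>u<2*m. cnj (cis (2*pi*real 0 * real u / real (2*m))) * cis (2*pi*real (k'-4) * real u / real (2*m)))"
    unfolding sum_distrib_left by (rule sum.cong) (use m k k' in \<open>simp_all add: ucol_outer\<close>)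
  also have "\<dots> = 0" using cis_orthogonality[of "2*m" 0 "k'-4"] m k' by simp
  finally show ?thesis unfolding sum_inner_outer sum_ucol_inner_eq_0[OF disjI2[OF k'(1)]] by simp
qed

lemma ucol_orthonormal_fourier:
  assumes m: "m \<ge> 1" and k: "5 \<le> k" "k < 2*m+4" and k': "5 \<le> k'" "k' < 2*m+4"
  shows "(\<Sum>i<2*m+4. cnj (ucol m c s k i) * ucol m c s k' i) = (if k = k' then 1 else 0)"
proof -
  have "(\<Sum>u<2*m. cnj (ucol m c s k (outer_coord m u)) * ucol m c s k' (outer_coord m u))
      = (\<Sum>u<2*m. cnj (cis (2*pi*real (k-4) * real u / real (2*m)))
           * cis (2*pi*real (k'-4) * real u / real (2*m))) / of_nat (2*m)"
    unfolding sum_divide_distrib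
    by (rule sum.cong) (use k k' of_real_sqrt_mult_self[of "2*m"] in \<open>simp_all add: ucol_outer\<close>)
  also have "\<dots> = (if k = k' then 1 else 0)"
    using cis_orthogonality[of "2*m" "k-4" "k'-4"] m k k' by auto
  finally show ?thesis unfolding sum_inner_outer sum_ucol_inner_eq_0[OF disjI1[OF k(1)]] by simp
qed

lemma ucol_orthonormal:
  assumes m: "m \<ge> 1" and cs: "c^2 + s^2 = 1" and k: "k < 2*m+4" and k': "k' < 2*m+4"
  shows "(\<Sum>i<2*m+4. cnj (ucol m c s k i) * ucol m c s k' i) = (if k = k' then 1 else 0)"
proof -
  have swap: "(\<Sum>i<2*m+4. cnj (ucol m c s k i) * ucol m c s k' i)
      = cnj (\<Sum>i<2*m+4. cnj (ucol m c s k' i) * ucol m c s k i)"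
    by (simp add: mult.commute)
  consider "k \<le> 4" "k' \<le> 4" | "k \<le> 4" "k' \<ge> 5" | "k \<ge> 5" "k' \<le> 4" | "k \<ge> 5" "k' \<ge> 5"
    by linarith
  thus ?thesis
  proof cases
    case 1 thus ?thesis by (rule ucol_orthonormal_low[OF m cs])
  next
    case 2 thus ?thesis using ucol_orthogonal_low_fourier[OF m _ _ k'] by simp
  next
    case 3 thus ?thesis unfolding swap using ucol_orthogonal_low_fourier[OF m _ _ k] by simp
  next
    case 4 thus ?thesis using ucol_orthonormal_fourier[OF m _ k _ k'] by simp
  qed
qed

lemma umat_unitary:
  assumes m: "m \<ge> 1" and cs: "c^2 + s^2 = 1"
  shows "conj_transpose_mat (umat m c s) * umat m c s = 1\<^sub>m (2*m+4)"
proof (rule eq_matI)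
  fix k k' assume "k < dim_row (1\<^sub>m (2*m+4))" and "k' < dim_col (1\<^sub>m (2*m+4))"
  hence k: "k < 2*m+4" and k': "k' < 2*m+4" by auto
  have "(conj_transpose_mat (umat m c s) * umat m c s) $$ (k,k')
      = (\<Sum>i<2*m+4. cnj (ucol m c s k i) * ucol m c s k' i)"
    using k k' by (simp add: conj_transpose_mat_def umat_def scalar_prod_def atLeast0LessThan)
  also have "\<dots> = 1\<^sub>m (2*m+4) $$ (k,k')" using ucol_orthonormal[OF m cs k k'] k k' by simp
  finally show "(conj_transpose_mat (umat m c s) * umat m c s) $$ (k,k') = 1\<^sub>m (2*m+4) $$ (k,k')" .
qed (auto simp: conj_transpose_mat_def umat_def)

section \<open>The constructed matrix\<close>

text \<open>The spectrum of the outer circulant block is invariant under conjugation combined with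
  \<open>f \<mapsto> 2*m-f\<close>, which makes the block real.\<close>

definition circ_eigval :: "nat \<Rightarrow> real \<Rightarrow> (nat \<Rightarrow> complex) \<Rightarrow> nat \<Rightarrow> complex" where
  "circ_eigval m l3 z f = (if f < m then z f else if f = m then complex_of_real l3 else cnj (z (2*m - f)))"

definition eigval :: "nat \<Rightarrow> real \<Rightarrow> real \<Rightarrow> real \<Rightarrow> real \<Rightarrow> (nat \<Rightarrow> complex) \<Rightarrow> nat \<Rightarrow> complex" where
  "eigval m l0 l1 l2 l3 z k =
     (if k = 0 then complex_of_real l0 else if k = 1 then z m else if k = 2 then cnj (z m)
      else if k = 3 then complex_of_real l1 else if k = 4 then complex_of_real l2
      else circ_eigval m l3 z (k - 4))"

definition circ_kernel :: "nat \<Rightarrow> real \<Rightarrow> (nat \<Rightarrow> complex) \<Rightarrow> int \<Rightarrow> complex" where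
  "circ_kernel m l3 z d = (\<Sum>f\<in>{1..<2*m}. circ_eigval m l3 z f * cis (2*pi*real f*of_int d/real (2*m)))"

definition outer_block :: "nat \<Rightarrow> real \<Rightarrow> (nat \<Rightarrow> complex) \<Rightarrow> nat \<Rightarrow> nat \<Rightarrow> complex" where
  "outer_block m l3 z i l = (if inner_pos m i \<or> inner_pos m l then 0
     else circ_kernel m l3 z (int (outer_coord m i) - int (outer_coord m l)) / of_nat (2*m))"

lemma cnj_circ_kernel:
  assumes m: "m \<ge> 1"
  shows "cnj (circ_kernel m l3 z d) = circ_kernel m l3 z d"
proof -
  have "cnj (circ_kernel m l3 z d)
      = (\<Sum>f\<in>{1..<2*m}. cnj (circ_eigval m l3 z f) * cis (- (2*pi*real f*of_int d/real (2*m))))"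
    unfolding circ_kernel_def by (simp add: cis_cnj)
  also have "\<dots> = circ_kernel m l3 z d" unfolding circ_kernel_def
  proof (rule sum.reindex_bij_witness[where i="\<lambda>f. 2*m-f" and j="\<lambda>f. 2*m-f"])
    fix f assume f: "f \<in> {1..<2*m}"
    have "cis (2*pi*real (2*m-f)*of_int d/real (2*m))
        = cis (- (2*pi*real f*of_int d/real (2*m)) + 2*pi*of_int d)"
      using f m by (intro arg_cong[where f=cis]) (simp add: field_simps)
    also have "\<dots> = cis (- (2*pi*real f*of_int d/real (2*m)))" by (rule cis_add_multiple_2pi)
    finally show "circ_eigval m l3 z (2*m-f) * cis (2*pi*real (2*m-f)*of_int d/real (2*m)) =
        cnj (circ_eigval m l3 z f) * cis (- (2*pi*real f*of_int d/real (2*m)))"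
      using f by (auto simp: circ_eigval_def)
  qed auto
  finally show ?thesis .
qed

lemma circ_kernel_add_period: "circ_kernel m l3 z (d + int (2*m)) = circ_kernel m l3 z d"
  unfolding circ_kernel_def
proof (rule sum.cong)
  fix f assume f: "f \<in> {1..<2*m}"
  have "cis (2*pi*real f*of_int (d + int (2*m))/real (2*m))
      = cis (2*pi*real f*of_int d/real (2*m) + 2*pi*of_int (int f))"
    using f by (intro arg_cong[where f=cis]) (simp add: field_simps)
  thus "circ_eigval m l3 z f * cis (2*pi*real f*of_int (d + int (2*m))/real (2*m)) =
     circ_eigval m l3 z f * cis (2*pi*real f*of_int d/real (2*m))"
    by (simp only: cis_add_multiple_2pi)
qed simp

lemma norm_circ_kernel_le:
  assumes m: "m \<ge> 1"
  shows "cmod (circ_kernel m l3 z d) \<le> \<bar>l3\<bar> + 2 * (\<Sum>j\<in>{1..<m}. cmod (z j))"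
proof -
  have split: "{1..<2*m} = {1..<m} \<union> {m} \<union> {m+1..<2*m}" using m by auto
  have "cmod (circ_kernel m l3 z d) \<le> (\<Sum>f\<in>{1..<2*m}. cmod (circ_eigval m l3 z f))"
    unfolding circ_kernel_def by (rule order_trans[OF norm_sum]) (simp add: norm_mult)
  also have "\<dots> = (\<Sum>f\<in>{1..<m}. cmod (z f)) + \<bar>l3\<bar> + (\<Sum>f\<in>{m+1..<2*m}. cmod (z (2*m-f)))"
    unfolding split by (subst sum.union_disjoint, auto)+ (auto simp: circ_eigval_def intro!: sum.cong)
  also have "(\<Sum>f\<in>{m+1..<2*m}. cmod (z (2*m-f))) = (\<Sum>j\<in>{1..<m}. cmod (z j))"
    by (rule sum.reindex_bij_witness[where i="\<lambda>j. 2*m-j" and j="\<lambda>f. 2*m-f"]) auto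
  finally show ?thesis by simp
qed

lemma sum_fourier_columns:
  assumes m: "m \<ge> 1"
  shows "(\<Sum>k\<in>{5..<2*m+4}. ucol m c s k i * eigval m l0 l1 l2 l3 z k * cnj (ucol m c s k l))
       = outer_block m l3 z i l"
proof (cases "inner_pos m i \<or> inner_pos m l")
  case True
  thus ?thesis unfolding outer_block_def
    by (auto simp: ucol_def fourier_vec_def intro!: sum.neutral)
next
  case False
  let ?e = "\<lambda>f x. cis (2*pi*real f * real (outer_coord m x) / real (2*m))"
  have phase: "?e f i * cnj (?e f l)
      = cis (2*pi*real f*of_int (int (outer_coord m i) - int (outer_coord m l))/real (2*m))" for f
    by (simp add: cis_cnj cis_mult diff_divide_distrib algebra_simps)
  have "(\<Sum>k\<in>{5..<2*m+4}. ucol m c s k i * eigval m l0 l1 l2 l3 z k * cnj (ucol m c s k l))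
     = (\<Sum>f\<in>{1..<2*m}. fourier_vec m f i * circ_eigval m l3 z f * cnj (fourier_vec m f l))"
    by (rule sum.reindex_bij_witness[where i="\<lambda>f. f+4" and j="\<lambda>k. k-4"])
      (auto simp: eigval_def ucol_def)
  also have "\<dots> = (\<Sum>f\<in>{1..<2*m}. circ_eigval m l3 z f * (?e f i * cnj (?e f l))) / of_nat (2*m)"
    unfolding sum_divide_distrib
  proof (rule sum.cong)
    fix f
    show "fourier_vec m f i * circ_eigval m l3 z f * cnj (fourier_vec m f l)
        = circ_eigval m l3 z f * (?e f i * cnj (?e f l)) / of_nat (2*m)"
      using False unfolding fourier_vec_def of_real_sqrt_mult_self[symmetric] by (simp add: field_simps)
  qed simp
  also have "\<dots> = outer_block m l3 z i l"
    using False unfolding phase outer_block_def circ_kernel_def by simp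
  finally show ?thesis .
qed

definition aent :: "nat \<Rightarrow> real \<Rightarrow> real \<Rightarrow> real \<Rightarrow> real \<Rightarrow> real \<Rightarrow> real \<Rightarrow> (nat \<Rightarrow> complex)
    \<Rightarrow> nat \<Rightarrow> nat \<Rightarrow> real" where
  "aent m c s l0 l1 l2 l3 z i l =
     l0 * pvec m c s i * pvec m c s l + l1 * wvec1 m i * wvec1 m l + l2 * wvec2 m i * wvec2 m l
     + 2 * Re (z m * vvec m c s i * cnj (vvec m c s l)) + Re (outer_block m l3 z i l)"

definition amat :: "nat \<Rightarrow> real \<Rightarrow> real \<Rightarrow> real \<Rightarrow> real \<Rightarrow> real \<Rightarrow> real \<Rightarrow> (nat \<Rightarrow> complex)
    \<Rightarrow> real mat" where
  "amat m c s l0 l1 l2 l3 z = mat (2*m+4) (2*m+4) (\<lambda>(i,l). aent m c s l0 l1 l2 l3 z i l)"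

lemma amat_carrier: "amat m c s l0 l1 l2 l3 z \<in> carrier_mat (2*m+4) (2*m+4)"
  by (simp add: amat_def)

lemma outer_block_real:
  assumes "m \<ge> 1"
  shows "complex_of_real (Re (outer_block m l3 z i l)) = outer_block m l3 z i l"
proof -
  have "Im (circ_kernel m l3 z d) = 0" for d
    using cnj_circ_kernel[OF assms, of l3 z d] by (simp add: complex_eq_iff)
  thus ?thesis by (simp add: outer_block_def complex_eq_iff)
qed

lemma amat_unitary_diag:
  assumes m: "m \<ge> 1"
  shows "map_mat complex_of_real (amat m c s l0 l1 l2 l3 z)
       = umat m c s * mat_diag (2*m+4) (eigval m l0 l1 l2 l3 z) * conj_transpose_mat (umat m c s)"
    (is "_ = ?U * ?D * conj_transpose_mat ?U")
proof (rule eq_matI)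
  fix i l assume "i < dim_row (?U * ?D * conj_transpose_mat ?U)" "l < dim_col (?U * ?D * conj_transpose_mat ?U)"
  hence i: "i < 2*m+4" and l: "l < 2*m+4" by (simp_all add: umat_def conj_transpose_mat_def)
  have split: "{..<2*m+4} = {0,1,2,3,4} \<union> {5..<2*m+4}" using m by auto
  let ?q = "z m * vvec m c s i * cnj (vvec m c s l)"
  have "(?U * ?D * conj_transpose_mat ?U) $$ (i,l)
      = (\<Sum>k<2*m+4. ucol m c s k i * eigval m l0 l1 l2 l3 z k * cnj (ucol m c s k l))"
    using i l by (simp add: index_mult_mat_diag_mult[OF umat_carrier conj_transpose_mat_carrier[OF umat_carrier]])
      (simp add: umat_def conj_transpose_mat_def)
  also have "\<dots> = complex_of_real (l0 * pvec m c s i * pvec m c s l + l1 * wvec1 m i * wvec1 m l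
        + l2 * wvec2 m i * wvec2 m l) + (?q + cnj ?q) + outer_block m l3 z i l"
    unfolding split using sum_fourier_columns[OF m, of c s i l0 l1 l2 l3 z l]
    by (simp add: sum.union_disjoint ucol_def eigval_def algebra_simps)
  also have "?q + cnj ?q = complex_of_real (2 * Re ?q)" by (rule complex_add_cnj)
  also have "outer_block m l3 z i l = complex_of_real (Re (outer_block m l3 z i l))"
    by (rule outer_block_real[OF m, symmetric])
  finally have "(?U * ?D * conj_transpose_mat ?U) $$ (i,l) = complex_of_real (aent m c s l0 l1 l2 l3 z i l)"
    unfolding aent_def by simp
  thus "map_mat complex_of_real (amat m c s l0 l1 l2 l3 z) $$ (i,l)
      = (?U * ?D * conj_transpose_mat ?U) $$ (i,l)"
    using i l by (simp add: amat_def)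
qed (simp_all add: amat_def umat_def conj_transpose_mat_def)

section \<open>Nonnegativity\<close>

lemma norm_vvec_inner:
  assumes "inner_pos m i"
  shows "cmod (vvec m c s i) = sqrt (1 + s^2) / (2 * sqrt 2)"
proof -
  have "cmod (vvec m c s i) = sqrt ((s/(2*sqrt 2))^2 + (had3 (i-m)/(2*sqrt 2))^2)"
    using assms by (simp add: vvec_def cmod_def)
  also have "(s/(2*sqrt 2))^2 + (had3 (i-m)/(2*sqrt 2))^2 = (1 + s^2) / 8"
    by (simp add: power2_eq_square field_simps had3_def)
  also have "sqrt ((1 + s^2) / 8) = sqrt (1 + s^2) / (2 * sqrt 2)"
    using real_sqrt_mult[of 4 2] by (simp add: real_sqrt_divide)
  finally show ?thesis .
qed

lemma norm_vvec_outer: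
  assumes "\<not> inner_pos m i" and "c \<ge> 0"
  shows "cmod (vvec m c s i) = c / (sqrt 2 * sqrt (2*m))"
  using assms by (simp add: vvec_def cmod_def)

lemma norm_outer_block_le:
  assumes "m \<ge> 1"
  shows "cmod (outer_block m l3 z i l) \<le> (\<bar>l3\<bar> + 2 * (\<Sum>j\<in>{1..<m}. cmod (z j))) / real (2*m)"
  using norm_circ_kernel_le[OF assms] assms
  by (auto simp: outer_block_def norm_divide sum_nonneg intro: divide_right_mono)

lemma aent_lower_bound:
  "aent m c s l0 l1 l2 l3 z i l \<ge> l0 * pvec m c s i * pvec m c s l
    - \<bar>l1\<bar> * \<bar>wvec1 m i\<bar> * \<bar>wvec1 m l\<bar> - \<bar>l2\<bar> * \<bar>wvec2 m i\<bar> * \<bar>wvec2 m l\<bar>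
    - 2 * (cmod (z m) * cmod (vvec m c s i) * cmod (vvec m c s l)) - cmod (outer_block m l3 z i l)"
proof -
  have "x * y * w \<ge> - (\<bar>x\<bar> * \<bar>y\<bar> * \<bar>w\<bar>)" for x y w :: real
    by (metis abs_ge_minus_self abs_mult minus_le_iff)
  moreover have "Re w \<ge> - cmod w" for w using abs_Re_le_cmod[of w] by linarith
  ultimately show ?thesis
    unfolding aent_def by (smt (verit) norm_mult complex_mod_cnj)
qed

lemma abs_wvec_inner:
  assumes "inner_pos m x"
  shows "\<bar>wvec1 m x\<bar> = 1/2" and "\<bar>wvec2 m x\<bar> = 1/2"
  using assms by (simp_all add: wvec1_def wvec2_def had1_def had2_def)

lemma pvec_vvec_inner_inner:
  assumes "inner_pos m i" and "inner_pos m l"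
  shows "l0 * pvec m c s i * pvec m c s l - 2 * (r * cmod (vvec m c s i) * cmod (vvec m c s l))
       = (l0 * c^2 - r * (1 + s^2)) / 4"
  unfolding norm_vvec_inner[OF assms(1)] norm_vvec_inner[OF assms(2)] using assms
  by (simp add: pvec_def field_simps power2_eq_square)

lemma pvec_vvec_inner_outer:
  assumes "inner_pos m i" and "\<not> inner_pos m l" and "c \<ge> 0"
  shows "l0 * pvec m c s i * pvec m c s l - 2 * (r * cmod (vvec m c s i) * cmod (vvec m c s l))
       = c / (2 * sqrt (2*m)) * (l0 * s - r * sqrt (1 + s^2))"
proof -
  have sq2: "sqrt 2 * (sqrt 2 * x) = 2 * x" for x :: real by (simp add: mult.assoc[symmetric])
  show ?thesis
    unfolding norm_vvec_inner[OF assms(1)] norm_vvec_outer[OF assms(2,3)] using assms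
    by (simp add: pvec_def field_simps sq2) (simp add: add_divide_distrib[symmetric])
qed

lemma pvec_vvec_outer_outer:
  assumes "\<not> inner_pos m i" and "\<not> inner_pos m l" and "c \<ge> 0"
  shows "l0 * pvec m c s i * pvec m c s l - 2 * (r * cmod (vvec m c s i) * cmod (vvec m c s l))
       = (l0 * s^2 - r * c^2) / real (2*m)"
  unfolding norm_vvec_outer[OF assms(1,3)] norm_vvec_outer[OF assms(2,3)] using assms
  by (simp add: pvec_def field_simps power2_eq_square) (simp add: add_divide_distrib[symmetric])

lemma aent_nonneg:
  assumes m: "m \<ge> 1" and c: "c \<ge> 0"
    and H1: "l0 * c^2 \<ge> \<bar>l1\<bar> + \<bar>l2\<bar> + cmod (z m) * (1 + s^2)"
    and H2: "l0 * s \<ge> cmod (z m) * sqrt (1 + s^2)"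
    and H3: "l0 * s^2 \<ge> cmod (z m) * c^2 + \<bar>l3\<bar> + 2 * (\<Sum>j\<in>{1..<m}. cmod (z j))"
  shows "aent m c s l0 l1 l2 l3 z i l \<ge> 0"
proof -
  let ?Z = "cmod (z m)"
  let ?lead = "\<lambda>x y. l0 * pvec m c s x * pvec m c s y - 2 * (?Z * cmod (vvec m c s x) * cmod (vvec m c s y))"
  have mixed: "?lead x y \<ge> 0" if "inner_pos m x" "\<not> inner_pos m y" for x y
    using pvec_vvec_inner_outer[OF that c] H2 c by simp
  consider "inner_pos m i" "inner_pos m l" | "inner_pos m i" "\<not> inner_pos m l"
    | "\<not> inner_pos m i" "inner_pos m l" | "\<not> inner_pos m i" "\<not> inner_pos m l" by blast
  hence "?lead i l - \<bar>l1\<bar> * \<bar>wvec1 m i\<bar> * \<bar>wvec1 m l\<bar> - \<bar>l2\<bar> * \<bar>wvec2 m i\<bar> * \<bar>wvec2 m l\<bar>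
      - cmod (outer_block m l3 z i l) \<ge> 0"
  proof cases
    case 1
    have w: "\<bar>l1\<bar> * \<bar>wvec1 m i\<bar> * \<bar>wvec1 m l\<bar> = \<bar>l1\<bar> / 4"
        "\<bar>l2\<bar> * \<bar>wvec2 m i\<bar> * \<bar>wvec2 m l\<bar> = \<bar>l2\<bar> / 4"
      by (simp_all add: abs_wvec_inner[OF 1(1)] abs_wvec_inner[OF 1(2)])
    have "cmod (outer_block m l3 z i l) = 0" using 1 by (simp add: outer_block_def)
    thus ?thesis unfolding pvec_vvec_inner_inner[OF 1] w using H1 by (simp add: field_simps)
  next
    case 2 thus ?thesis using mixed[of i l] by (simp add: wvec1_def wvec2_def outer_block_def)
  next
    case 3 thus ?thesis using mixed[of l i] by (simp add: wvec1_def wvec2_def outer_block_def ac_simps)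
  next
    case 4
    have "(\<bar>l3\<bar> + 2 * (\<Sum>j\<in>{1..<m}. cmod (z j))) / real (2*m) \<le> (l0 * s^2 - ?Z * c^2) / real (2*m)"
      using H3 by (simp add: divide_right_mono)
    thus ?thesis using 4 pvec_vvec_outer_outer[OF 4 c] norm_outer_block_le[OF m, of l3 z i l]
      by (simp add: wvec1_def wvec2_def)
  qed
  thus ?thesis using aent_lower_bound[of l0 m c s i l l1 l2 z l3] by linarith
qed

section \<open>Centrosymmetry and spectrum\<close>

lemma pvec_reflect: "i < 2*m+4 \<Longrightarrow> pvec m c s (2*m+3-i) = pvec m c s i"
  by (simp add: pvec_def inner_pos_reflect)

lemma vvec_reflect: "i < 2*m+4 \<Longrightarrow> vvec m c s (2*m+3-i) = vvec m c s i"
  using inner_pos_reflect[of i m] by (auto simp: vvec_def inner_pos_def had3_def)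

lemma wvec1_reflect: "i < 2*m+4 \<Longrightarrow> wvec1 m (2*m+3-i) = - wvec1 m i"
  using inner_pos_reflect[of i m] by (auto simp: wvec1_def inner_pos_def had1_def)

lemma wvec2_reflect:
  assumes "i < 2*m+4"
  shows "wvec2 m (2*m+3-i) = - wvec2 m i"
proof (cases "inner_pos m i")
  case True
  then obtain j where "j < 4" "i = m + j" by (metis inner_pos_def le_add_diff_inverse add_less_cancel_left)
  moreover from this have "j = 0 \<or> j = 1 \<or> j = 2 \<or> j = 3" by auto
  ultimately show ?thesis by (elim disjE) (simp_all add: wvec2_def had2_def inner_pos_def)
next
  case False thus ?thesis using inner_pos_reflect[OF assms] by (simp add: wvec2_def)
qed

lemma outer_block_reflect:
  assumes i: "i < 2*m+4" and l: "l < 2*m+4"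
  shows "outer_block m l3 z (2*m+3-i) (2*m+3-l) = outer_block m l3 z i l"
proof (cases "inner_pos m i \<or> inner_pos m l")
  case True thus ?thesis using inner_pos_reflect[OF i] inner_pos_reflect[OF l] by (simp add: outer_block_def)
next
  case False
  define d where "d = int (outer_coord m i) - int (outer_coord m l)"
  have "int (outer_coord m (2*m+3-i)) - int (outer_coord m (2*m+3-l)) \<in> {d, d + int (2*m), d - int (2*m)}"
    using outer_coord_reflect[OF i] outer_coord_reflect[OF l] False unfolding d_def by auto
  moreover have "circ_kernel m l3 z (d - int (2*m)) = circ_kernel m l3 z d"
    using circ_kernel_add_period[of m l3 z "d - int (2*m)"] by simp
  ultimately have "circ_kernel m l3 z (int (outer_coord m (2*m+3-i)) - int (outer_coord m (2*m+3-l)))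
      = circ_kernel m l3 z d"
    using circ_kernel_add_period[of m l3 z d] by auto
  thus ?thesis using False inner_pos_reflect[OF i] inner_pos_reflect[OF l]
    by (simp add: outer_block_def d_def)
qed

lemma aent_reflect:
  assumes "i < 2*m+4" and "l < 2*m+4"
  shows "aent m c s l0 l1 l2 l3 z (2*m+3-i) (2*m+3-l) = aent m c s l0 l1 l2 l3 z i l"
  using assms
  by (simp add: aent_def pvec_reflect vvec_reflect wvec1_reflect wvec2_reflect outer_block_reflect)

lemma amat_centrosymmetric: "centrosymmetric (amat m c s l0 l1 l2 l3 z)"
proof (rule centrosymmetricI[OF amat_carrier])
  fix i j assume i: "i < 2*m+4" and j: "j < 2*m+4"
  have e: "2*m+4-1-x = 2*m+3-x" for x :: nat by simp
  show "amat m c s l0 l1 l2 l3 z $$ (2*m+4-1-i, 2*m+4-1-j) = amat m c s l0 l1 l2 l3 z $$ (i,j)"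
    unfolding e using i j by (simp only: amat_def index_mat split) (simp add: aent_reflect[OF i j])
qed

lemma prod_eigval_eq_prod_list:
  fixes h :: "complex \<Rightarrow> 'a::comm_monoid_mult"
  assumes m: "m \<ge> 1"
  shows "(\<Prod>k<2*m+4. h (eigval m l0 l1 l2 l3 z k)) =
    prod_list (map h ([complex_of_real l0, complex_of_real l1, complex_of_real l2, complex_of_real l3]
              @ map z [1..<m+1] @ map (\<lambda>j. cnj (z j)) [1..<m+1]))"
proof -
  have circ: "(\<Prod>f\<in>{1..<2*m}. h (circ_eigval m l3 z f))
      = (\<Prod>j\<in>{1..<m}. h (z j)) * h (of_real l3) * (\<Prod>j\<in>{1..<m}. h (cnj (z j)))"
  proof -
    have split: "{1..<2*m} = {1..<m} \<union> {m} \<union> {m+1..<2*m}" using m by auto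
    have "(\<Prod>f\<in>{1..<2*m}. h (circ_eigval m l3 z f))
        = (\<Prod>f\<in>{1..<m}. h (z f)) * h (of_real l3) * (\<Prod>f\<in>{m+1..<2*m}. h (cnj (z (2*m-f))))"
      unfolding split by (subst prod.union_disjoint, auto)+ (auto simp: circ_eigval_def ac_simps intro!: prod.cong)
    also have "(\<Prod>f\<in>{m+1..<2*m}. h (cnj (z (2*m-f)))) = (\<Prod>j\<in>{1..<m}. h (cnj (z j)))"
      by (rule prod.reindex_bij_witness[where i="\<lambda>j. 2*m-j" and j="\<lambda>f. 2*m-f"]) auto
    finally show ?thesis .
  qed
  have "{..<2*m+4} = {0,1,2,3,4} \<union> {5..<2*m+4}" using m by auto
  hence "(\<Prod>k<2*m+4. h (eigval m l0 l1 l2 l3 z k)) =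
      h (of_real l0) * h (z m) * h (cnj (z m)) * h (of_real l1) * h (of_real l2) *
      (\<Prod>k\<in>{5..<2*m+4}. h (circ_eigval m l3 z (k-4)))"
    by (simp add: prod.union_disjoint eigval_def mult.assoc)
  also have "(\<Prod>k\<in>{5..<2*m+4}. h (circ_eigval m l3 z (k-4))) = (\<Prod>f\<in>{1..<2*m}. h (circ_eigval m l3 z f))"
    by (rule prod.reindex_bij_witness[where i="\<lambda>f. f+4" and j="\<lambda>k. k-4"]) auto
  also have "prod_list (map h (map g [1..<m+1])) = h (g m) * (\<Prod>j\<in>{1..<m}. h (g j))" for g
  proof -
    have "prod_list (map h (map g [1..<m+1])) = (\<Prod>j\<in>set [1..<m+1]. h (g j))"
      unfolding map_map comp_def by (rule prod.distinct_set_conv_list[symmetric]) simp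
    also have "set [1..<m+1] = insert m {1..<m}" using m by auto
    also have "(\<Prod>j\<in>insert m {1..<m}. h (g j)) = h (g m) * (\<Prod>j\<in>{1..<m}. h (g j))" by simp
    finally show ?thesis .
  qed
  ultimately show ?thesis unfolding circ by (simp add: ac_simps)
qed

lemma amat_normal:
  assumes "m \<ge> 1" and "c^2 + s^2 = 1"
  shows "normal_real_mat (amat m c s l0 l1 l2 l3 z)"
  using normal_real_mat_of_unitary_diag[OF amat_carrier umat_carrier umat_unitary[OF assms]
      amat_unitary_diag[OF assms(1)]] .

lemma amat_has_eigenvalues:
  assumes "m \<ge> 1" and "c^2 + s^2 = 1"
  shows "has_eigenvalues (amat m c s l0 l1 l2 l3 z)
           ([complex_of_real l0, complex_of_real l1, complex_of_real l2, complex_of_real l3]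
            @ map z [1..<m+1] @ map (\<lambda>j. cnj (z j)) [1..<m+1])"
  unfolding has_eigenvalues_def amat_unitary_diag[OF assms(1)]
    char_poly_unitary_conj_diag[OF umat_carrier umat_unitary[OF assms]]
  by (rule prod_eigval_eq_prod_list[OF assms(1)])

lemma amat_nonneg:
  assumes "m \<ge> 1" and "c \<ge> 0"
    and "l0 * c^2 \<ge> \<bar>l1\<bar> + \<bar>l2\<bar> + cmod (z m) * (1 + s^2)"
    and "l0 * s \<ge> cmod (z m) * sqrt (1 + s^2)"
    and "l0 * s^2 \<ge> cmod (z m) * c^2 + \<bar>l3\<bar> + 2 * (\<Sum>j\<in>{1..<m}. cmod (z j))"
  shows "nonneg_mat (amat m c s l0 l1 l2 l3 z)"
  using aent_nonneg[OF assms] by (simp add: nonneg_mat_def amat_def)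

text \<open>Taking \<open>s\<^sup>2 = \<sigma>\<close> makes the third inequality an equality; the first then follows
  from \<open>l0 \<ge> a + t + 2*Y + 2*Z\<close> and the second from \<open>l0 - Z \<ge> Z\<close>.\<close>

lemma rotation_parameters:
  fixes l0 a t Y Z :: real
  assumes a: "a \<ge> 0" and t: "t \<ge> 0" and Y: "Y \<ge> 0" and Z: "Z > 0"
    and big: "l0 \<ge> a + t + 2*Y + 2*Z"
  obtains c s where "c \<ge> 0" "c^2 + s^2 = 1"
    "l0 * c^2 \<ge> a + Z * (1 + s^2)" "l0 * s \<ge> Z * sqrt (1 + s^2)" "l0 * s^2 \<ge> Z * c^2 + t + 2*Y"
proof -
  define \<sigma> where "\<sigma> = (t + 2*Y + Z) / (l0 + Z)"
  have den: "l0 + Z > 0" using assms by linarith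
  have \<sigma>_eq: "\<sigma> * (l0 + Z) = t + 2*Y + Z" unfolding \<sigma>_def using den by simp
  have \<sigma>0: "\<sigma> \<ge> 0" unfolding \<sigma>_def using den t Y Z by simp
  have \<sigma>1: "\<sigma> \<le> 1" unfolding \<sigma>_def using den big a Z by simp
  define s where "s = sqrt \<sigma>"
  define c where "c = sqrt (1 - \<sigma>)"
  have s2: "s^2 = \<sigma>" and c2: "c^2 = 1 - \<sigma>" unfolding s_def c_def using \<sigma>0 \<sigma>1 by simp_all
  have "Z^2 * (1 + \<sigma>) \<le> l0^2 * \<sigma>"
  proof -
    have "Z * Z \<le> Z * (l0 - Z)" using big a t Y Z by (intro mult_left_mono) auto
    also have "\<dots> \<le> (\<sigma> * (l0 + Z)) * (l0 - Z)" using \<sigma>_eq big a t Y Z by (intro mult_right_mono) auto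
    finally show ?thesis by (simp add: power2_eq_square algebra_simps)
  qed
  hence "Z * sqrt (1 + s^2) \<le> l0 * s"
    using real_sqrt_le_mono[of "Z^2 * (1 + \<sigma>)" "l0^2 * \<sigma>"] big a t Y Z
    unfolding s2 by (simp add: s_def real_sqrt_mult)
  moreover have "c \<ge> 0" unfolding c_def using \<sigma>1 by simp
  moreover have "c^2 + s^2 = 1" using c2 s2 by simp
  moreover have "l0 * c^2 \<ge> a + Z * (1 + s^2)" "l0 * s^2 \<ge> Z * c^2 + t + 2*Y"
    unfolding c2 s2 using \<sigma>_eq big by (simp_all add: algebra_simps)
  ultimately show ?thesis using that by blast
qed

theorem theorem3p14:
  fixes m :: nat and l0 l1 l2 l3 :: real and z :: "nat \<Rightarrow> complex"
  assumes "m \<ge> 1"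
    and "l0 \<ge> 0" and "0 > l1" and "l1 \<ge> l2" and "l2 \<ge> l3"
    and "\<forall>j\<in>{1..m}. Im (z j) > 0"
    and "l0 + l1 + l2 + l3 - 2 * (\<Sum>j=1..m. cmod (z j)) \<ge> 0"
  shows "\<exists>A :: real mat. A \<in> carrier_mat (2*m+4) (2*m+4) \<and>
           normal_real_mat A \<and> centrosymmetric A \<and> nonneg_mat A \<and>
           has_eigenvalues A
             ([complex_of_real l0, complex_of_real l1, complex_of_real l2, complex_of_real l3]
              @ map z [1..<m+1] @ map (\<lambda>j. cnj (z j)) [1..<m+1])"
proof -
  note m = assms(1)
  define Y where "Y = (\<Sum>j\<in>{1..<m}. cmod (z j))"
  have "Im (z m) > 0" using assms(6) m by simp
  hence Z: "cmod (z m) > 0" by auto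
  have "{1..m} = insert m {1..<m}" using m by auto
  hence "(\<Sum>j=1..m. cmod (z j)) = Y + cmod (z m)" unfolding Y_def by simp
  hence "l0 \<ge> (\<bar>l1\<bar> + \<bar>l2\<bar>) + \<bar>l3\<bar> + 2*Y + 2*cmod (z m)" using assms(3-5,7) by linarith
  then obtain c s where c: "c \<ge> 0" and cs: "c^2 + s^2 = 1"
    and H1: "l0 * c^2 \<ge> \<bar>l1\<bar> + \<bar>l2\<bar> + cmod (z m) * (1 + s^2)"
    and H2: "l0 * s \<ge> cmod (z m) * sqrt (1 + s^2)"
    and H3: "l0 * s^2 \<ge> cmod (z m) * c^2 + \<bar>l3\<bar> + 2 * (\<Sum>j\<in>{1..<m}. cmod (z j))"
    using rotation_parameters[of "\<bar>l1\<bar> + \<bar>l2\<bar>" "\<bar>l3\<bar>" Y "cmod (z m)" l0] Z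
    by (auto simp: Y_def sum_nonneg add.assoc)
  show ?thesis
    by (intro exI[of _ "amat m c s l0 l1 l2 l3 z"] conjI amat_carrier amat_normal[OF m cs]
        amat_centrosymmetric amat_nonneg[OF m c H1 H2 H3] amat_has_eigenvalues[OF m cs])
qed

end
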